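(* Consider a robotic system with configuration $\xi\in\mathbb{R}^N$ ($N\ge 2$) obeying the rigid-body dynamics $$\mathcal{M}(\xi)\ddot\xi+\mathcal{C}(\xi,\dot\xi)\dot\xi+g(\xi)=\tau_c+\tau_e,$$ controlled by the damping controller $$\tau_c=g(\xi)+\mathcal{D}(\xi,\dot\xi)\bigl(f(\xi)-\dot\xi\bigr),$$ where the damping matrix $\mathcal{D}(\xi,\dot\xi)$ is the obstacle-aware damping matrix described in the context, and suppose that all damping values (all diagonal entries of the diagonal factors $\mathcal{S}$ in the decompositions $\mathcal{Q}\mathcal{S}\mathcal{Q}^{-1}$ of the damping matrices) are equal to $1$. Let $W(\xi,\dot\xi)=\tfrac12\dot\xi^T\mathcal{M}(\xi)\dot\xi$ be the kinetic energy. Then the closed-loop system is passive with respect to the input–output pair $(\tau_e,\dot\xi)$, with storage function $W$, whenever the velocity is at least as large as the desired velocity, i.e. $$\dot W\le \dot\xi^T\tau_e\qquad\text{for all }\xi\in\mathbb{R}^N\text{ with }\|\dot\xi\|\ge\|f(\xi)\|.$$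
   Context: $\mathcal{M}(\xi)\in\mathbb{R}^{N\times N}$ is the (symmetric positive definite) mass matrix, $\mathcal{C}$ the Coriolis matrix, $g$ the gravity vector, $\tau_c$ the control force and $\tau_e$ the external disturbance force; as for any physical system, $\dot{\mathcal{M}}-2\mathcal{C}$ is skew-symmetric. $f:\mathbb{R}^N\to\mathbb{R}^N$ is a continuous desired velocity field. Obstacles $o=1,\dots,N^{o}$ are described by distance functions $\Gamma_o(\xi)$ with $\Gamma_o>1$ outside, $=1$ on the boundary of the obstacle, and unit surface normals $n_o(\xi)$ pointing away from the obstacle; $\Gamma(\xi)=\min_o\Gamma_o(\xi)$. Averaged normal: $n(\xi)=\sum_{o}n_o(\xi)\,\frac{1/(\Gamma_o(\xi)-1)}{\sum_{p}1/(\Gamma_p(\xi)-1)}$. Danger weight: $w(\xi)=\max\!\bigl(0,\frac{\Gamma^{crit}-\Gamma(\xi)}{\Gamma^{crit}-1}\bigr)\|n(\xi)\|$ with a constant $\Gamma^{crit}>1$. The damping matrix is $\mathcal{D}(\xi,\dot\xi)=(1-w(\xi))\mathcal{D}^f(\xi)+w(\xi)\mathcal{D}^{o}(\xi,\dot\xi)$, where $\mathcal{D}^f=\mathcal{Q}^f\mathcal{S}^f(\mathcal{Q}^f)^{-1}$ with $\mathcal{Q}^f$ an orthonormal basis whose first column is $q_1^f=f/\|f\|$ and $\mathcal{S}^f$ diagonal with positive entries, and $\mathcal{D}^o=\mathcal{Q}^o\mathcal{S}^o(\mathcal{Q}^o)^{-1}$ with $\mathcal{Q}^o$ an orthonormal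 basis whose first column is $n/\|n\|$, second column the normalization of $q_1^f-p\,n/\|n\|$ with $p=\langle n/\|n\|,q_1^f\rangle$ (any orthonormal vector if $|p|=1$), and $\mathcal{S}^o$ diagonal with positive entries. In this lemma all diagonal entries of $\mathcal{S}^f$ and $\mathcal{S}^o$ equal $1$. *)

theory Defs
  imports "HOL-Analysis.Analysis"
begin

text \<open>Obstacles are indexed by 1..No; Gam o x is the distance function Gamma_o,
  nrm o x the unit surface normal n_o.\<close>

definition Gamma_min :: "(nat \<Rightarrow> 'a \<Rightarrow> real) \<Rightarrow> nat \<Rightarrow> 'a \<Rightarrow> real" where
  "Gamma_min Gam No x = Min ((\<lambda>k. Gam k x) ` {1..No})"

definition avg_normal ::
  "(nat \<Rightarrow> 'a \<Rightarrow> real) \<Rightarrow> (nat \<Rightarrow> 'a \<Rightarrow> real^'n) \<Rightarrow> nat \<Rightarrow> 'a \<Rightarrow> real^'n" where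
  "avg_normal Gam nrm No x =
     (\<Sum>k\<in>{1..No}. ((1 / (Gam k x - 1)) / (\<Sum>p\<in>{1..No}. 1 / (Gam p x - 1))) *\<^sub>R nrm k x)"

definition danger_weight ::
  "real \<Rightarrow> (nat \<Rightarrow> 'a \<Rightarrow> real) \<Rightarrow> (nat \<Rightarrow> 'a \<Rightarrow> real^'n) \<Rightarrow> nat \<Rightarrow> 'a \<Rightarrow> real" where
  "danger_weight Gcrit Gam nrm No x =
     max 0 ((Gcrit - Gamma_min Gam No x) / (Gcrit - 1)) * norm (avg_normal Gam nrm No x)"

definition damping_matrix ::
  "real \<Rightarrow> (nat \<Rightarrow> real^'n \<Rightarrow> real) \<Rightarrow> (nat \<Rightarrow> real^'n \<Rightarrow> real^'n) \<Rightarrow> nat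
   \<Rightarrow> (real^'n \<Rightarrow> real^'n^'n) \<Rightarrow> (real^'n \<Rightarrow> real^'n^'n)
   \<Rightarrow> (real^'n \<Rightarrow> real^'n \<Rightarrow> real^'n^'n) \<Rightarrow> (real^'n \<Rightarrow> real^'n \<Rightarrow> real^'n^'n)
   \<Rightarrow> real^'n \<Rightarrow> real^'n \<Rightarrow> real^'n^'n" where
  "damping_matrix Gcrit Gam nrm No Qf Sf Qo So x v =
     (let w = danger_weight Gcrit Gam nrm No x in
      (1 - w) *\<^sub>R (Qf x ** Sf x ** matrix_inv (Qf x))
      + w *\<^sub>R (Qo x v ** So x v ** matrix_inv (Qo x v)))"

end

theory Submission
  imports Defs
begin

text \<open>With all damping values equal to 1 each factor \<open>Q S Q\<^sup>-\<^sup>1\<close> is the identity, whatever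
  the orthonormal basis \<open>Q\<close>, so the damping matrix is the identity for every danger weight.
  Skew-symmetry of \<open>Md - 2 C\<close> turns the derivative of the kinetic energy into the power
  \<open>xd \<bullet> (M xdd + C xd) = xd \<bullet> (f - xd) + xd \<bullet> tau_e\<close>, and Cauchy-Schwarz gives
  \<open>xd \<bullet> f \<le> norm xd * norm f \<le> xd \<bullet> xd\<close> as soon as \<open>norm f \<le> norm xd\<close>.\<close>

lemma bounded_bilinear_matrix_vector_mult:
  "bounded_bilinear (\<lambda>(A::real^'n^'m) (x::real^'n). A *v x)"
proof -
  have "bilinear (\<lambda>(A::real^'n^'m) (x::real^'n). A *v x)"
    unfolding bilinear_def linear_iff
    by (auto simp: matrix_vector_mult_add_rdistrib matrix_vector_right_distrib
        matrix_vector_mult_def vec_eq_iff sum_distrib_left algebra_simps sum.distrib)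
  then show ?thesis
    using bilinear_conv_bounded_bilinear by blast
qed

lemma matrix_inv_right:
  fixes A :: "'a::semiring_1^'n^'m"
  assumes "invertible A"
  shows "A ** matrix_inv A = mat 1"
proof -
  have "A ** matrix_inv A = mat 1 \<and> matrix_inv A ** A = mat 1"
    using assms unfolding invertible_def matrix_inv_def by (rule someI_ex)
  then show ?thesis ..
qed

lemma orthogonal_matrix_imp_invertible:
  "orthogonal_matrix Q \<Longrightarrow> invertible Q"
  unfolding orthogonal_matrix_def invertible_def by blast

lemma damping_matrix_unit_damping:
  assumes "orthogonal_matrix (Qf x)" and "orthogonal_matrix (Qo x v)"
    and "Sf x = mat 1" and "So x v = mat 1"
  shows "damping_matrix Gcrit Gam nrm No Qf Sf Qo So x v = mat 1"
  using assms matrix_inv_right[OF orthogonal_matrix_imp_invertible[OF assms(1)]]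
    matrix_inv_right[OF orthogonal_matrix_imp_invertible[OF assms(2)]]
  unfolding damping_matrix_def Let_def
  by (simp add: scaleR_diff_left)

lemma inner_matrix_vector_mult_symmetric:
  fixes A :: "real^'n^'n"
  assumes "transpose A = A"
  shows "u \<bullet> (A *v v) = v \<bullet> (A *v u)"
  by (metis assms dot_lmul_matrix inner_commute transpose_transpose vector_transpose_matrix)

lemma inner_matrix_vector_mult_skew_self:
  fixes A :: "real^'n^'n"
  assumes "transpose A = - A"
  shows "v \<bullet> (A *v v) = 0"
proof -
  have "v \<bullet> (A *v v) = (transpose A *v v) \<bullet> v"
    by (simp add: dot_lmul_matrix flip: vector_transpose_matrix)
  also have "\<dots> = - (v \<bullet> (A *v v))"
    using assms bounded_bilinear.minus_left[OF bounded_bilinear_matrix_vector_mult, of A v]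
    by (simp add: inner_commute)
  finally show ?thesis by simp
qed

lemma kinetic_energy_has_real_derivative:
  fixes M :: "real \<Rightarrow> real^'n^'n" and v :: "real \<Rightarrow> real^'n"
  assumes M_deriv: "(M has_vector_derivative Md) (at t)"
    and v_deriv: "(v has_vector_derivative a) (at t)"
    and M_sym: "transpose (M t) = M t"
  shows "((\<lambda>s. (1/2) * (v s \<bullet> (M s *v v s))) has_real_derivative
           v t \<bullet> (M t *v a) + (1/2) * (v t \<bullet> (Md *v v t))) (at t)"
proof -
  have "((\<lambda>s. M s *v v s) has_vector_derivative M t *v a + Md *v v t) (at t)"
    using bounded_bilinear.has_vector_derivative
        [OF bounded_bilinear_matrix_vector_mult M_deriv v_deriv]
    by simp
  from bounded_bilinear.has_vector_derivative[OF bounded_bilinear_inner v_deriv this]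
  have "((\<lambda>s. v s \<bullet> (M s *v v s)) has_real_derivative
          v t \<bullet> (M t *v a + Md *v v t) + a \<bullet> (M t *v v t)) (at t)"
    by (simp add: has_real_derivative_iff_has_vector_derivative)
  from DERIV_cmult[OF this, of "1/2"] show ?thesis
    using inner_matrix_vector_mult_symmetric[OF M_sym, of a "v t"]
    by (simp add: inner_add_right algebra_simps)
qed

lemma kinetic_energy_power_balance:
  fixes M :: "real \<Rightarrow> real^'n^'n" and v :: "real \<Rightarrow> real^'n"
  assumes M_deriv: "(M has_vector_derivative Md) (at t)"
    and v_deriv: "(v has_vector_derivative a) (at t)"
    and M_sym: "transpose (M t) = M t"
    and skew: "transpose (Md - 2 *\<^sub>R C) = - (Md - 2 *\<^sub>R C)"
  shows "((\<lambda>s. (1/2) * (v s \<bullet> (M s *v v s))) has_real_derivative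
           v t \<bullet> (M t *v a + C *v v t)) (at t)"
proof -
  have "v t \<bullet> ((Md - 2 *\<^sub>R C) *v v t) = 0"
    using inner_matrix_vector_mult_skew_self[OF skew] .
  then have "(1/2) * (v t \<bullet> (Md *v v t)) = v t \<bullet> (C *v v t)"
    using bounded_bilinear.scaleR_left[OF bounded_bilinear_matrix_vector_mult, of 2 C "v t"]
    by (simp add: matrix_vector_mult_diff_rdistrib inner_diff_right)
  then show ?thesis
    using kinetic_energy_has_real_derivative[OF M_deriv v_deriv M_sym]
    by (simp add: inner_add_right)
qed

theorem lemma3p1:
  fixes xi xd xdd :: "real \<Rightarrow> real^'n"
    and M :: "real^'n \<Rightarrow> real^'n^'n"
    and Md :: "real \<Rightarrow> real^'n^'n"
    and C :: "real^'n \<Rightarrow> real^'n \<Rightarrow> real^'n^'n"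
    and g f :: "real^'n \<Rightarrow> real^'n"
    and tau_e :: "real \<Rightarrow> real^'n"
    and Gam :: "nat \<Rightarrow> real^'n \<Rightarrow> real" and nrm :: "nat \<Rightarrow> real^'n \<Rightarrow> real^'n"
    and No :: nat and Gcrit :: real
    and Qf Sf :: "real^'n \<Rightarrow> real^'n^'n"
    and Qo So :: "real^'n \<Rightarrow> real^'n \<Rightarrow> real^'n^'n"
    and i1 i2 :: 'n
  assumes dim: "CARD('n) \<ge> 2"
    and i12: "i1 \<noteq> i2"
    and traj_xi: "\<And>t. (xi has_vector_derivative xd t) (at t)"
    and traj_xd: "\<And>t. (xd has_vector_derivative xdd t) (at t)"
    and M_sym: "\<And>x. transpose (M x) = M x"
    and M_pd: "\<And>x v. v \<noteq> 0 \<Longrightarrow> v \<bullet> (M x *v v) > 0"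
    and M_deriv: "\<And>t. ((\<lambda>s. M (xi s)) has_vector_derivative Md t) (at t)"
    and skew: "\<And>t. transpose (Md t - 2 *\<^sub>R C (xi t) (xd t)) = - (Md t - 2 *\<^sub>R C (xi t) (xd t))"
    and f_cont: "continuous_on UNIV f"
    and Gcrit: "Gcrit > 1"
    and unit_normals: "\<And>k x. k \<in> {1..No} \<Longrightarrow> norm (nrm k x) = 1"
    and Qf_orth: "\<And>x. orthogonal_matrix (Qf x)"
    and Qf_col1: "\<And>x. f x \<noteq> 0 \<Longrightarrow> column i1 (Qf x) = (1 / norm (f x)) *\<^sub>R f x"
    and Sf_one: "\<And>x. Sf x = mat 1"
    and Qo_orth: "\<And>x v. orthogonal_matrix (Qo x v)"
    and Qo_col1: "\<And>x v. avg_normal Gam nrm No x \<noteq> 0 \<Longrightarrow>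
        column i1 (Qo x v) = (1 / norm (avg_normal Gam nrm No x)) *\<^sub>R avg_normal Gam nrm No x"
    and Qo_col2: "\<And>x v. avg_normal Gam nrm No x \<noteq> 0 \<Longrightarrow>
        (let nh = (1 / norm (avg_normal Gam nrm No x)) *\<^sub>R avg_normal Gam nrm No x;
             q1 = column i1 (Qf x); p = nh \<bullet> q1
         in \<bar>p\<bar> \<noteq> 1 \<longrightarrow>
            column i2 (Qo x v) = (1 / norm (q1 - p *\<^sub>R nh)) *\<^sub>R (q1 - p *\<^sub>R nh))"
    and So_one: "\<And>x v. So x v = mat 1"
    and dynamics: "\<And>t. M (xi t) *v xdd t + C (xi t) (xd t) *v xd t + g (xi t)
        = (g (xi t) + damping_matrix Gcrit Gam nrm No Qf Sf Qo So (xi t) (xd t) *v (f (xi t) - xd t))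
          + tau_e t"
  shows "\<forall>t. norm (xd t) \<ge> norm (f (xi t)) \<longrightarrow>
           (\<exists>Wd. ((\<lambda>s. (1/2) * (xd s \<bullet> (M (xi s) *v xd s))) has_real_derivative Wd) (at t)
                 \<and> Wd \<le> xd t \<bullet> tau_e t)"
proof (intro allI impI)
  fix t
  assume slow_target: "norm (f (xi t)) \<le> norm (xd t)"
  have "M (xi t) *v xdd t + C (xi t) (xd t) *v xd t = (f (xi t) - xd t) + tau_e t"
    using dynamics[of t] damping_matrix_unit_damping[OF Qf_orth Qo_orth Sf_one So_one]
    by simp
  moreover have "xd t \<bullet> f (xi t) \<le> xd t \<bullet> xd t"
  proof -
    have "xd t \<bullet> f (xi t) \<le> norm (xd t) * norm (f (xi t))"
      by (rule norm_cauchy_schwarz)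
    also have "\<dots> \<le> norm (xd t) * norm (xd t)"
      using slow_target by (simp add: mult_left_mono)
    finally show ?thesis
      by (simp add: dot_square_norm power2_eq_square)
  qed
  moreover have "((\<lambda>s. (1/2) * (xd s \<bullet> (M (xi s) *v xd s))) has_real_derivative
      xd t \<bullet> (M (xi t) *v xdd t + C (xi t) (xd t) *v xd t)) (at t)"
    using kinetic_energy_power_balance[OF M_deriv traj_xd M_sym skew] .
  ultimately show "\<exists>Wd. ((\<lambda>s. (1/2) * (xd s \<bullet> (M (xi s) *v xd s))) has_real_derivative Wd) (at t)
      \<and> Wd \<le> xd t \<bullet> tau_e t"
    by (auto simp: inner_add_right inner_diff_right)
qed

end
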